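(* For every $m\ge2$, no vertex of the unweighted subdivided star $G(m)$ is sedentary.
   Context: $G(m)$ is obtained from the star $K_{1,m}$ by subdividing each edge once: it has a central vertex of degree $m$ joined to $m$ vertices of degree two, each of which is adjacent to one further leaf (so $G(m)$ has $2m+1$ vertices). For a graph with adjacency matrix $A$, $U(t)=e^{itA}$; a vertex $u$ is sedentary if $\inf_{t>0}|U(t)_{u,u}|\ge C$ for some constant $0<C\le1$, and not sedentary if this infimum is $0$. *)

theory Defs
  imports Complex_Main "Jordan_Normal_Form.Matrix"
begin

(* Vertices of G(m) are 0..2m: 0 is the centre, 1..m are the degree-two
   vertices, and m+j (1 <= j <= m) is the leaf attached to j. *)
definition subdiv_star_edge :: "nat \<Rightarrow> nat \<Rightarrow> nat \<Rightarrow> bool" where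
  "subdiv_star_edge m i j \<longleftrightarrow>
     (i = 0 \<and> 1 \<le> j \<and> j \<le> m) \<or> (j = 0 \<and> 1 \<le> i \<and> i \<le> m) \<or>
     (1 \<le> i \<and> i \<le> m \<and> j = i + m) \<or> (1 \<le> j \<and> j \<le> m \<and> i = j + m)"

definition subdiv_star_adj :: "nat \<Rightarrow> complex mat" where
  "subdiv_star_adj m = mat (2*m+1) (2*m+1)
      (\<lambda>(i,j). if subdiv_star_edge m i j then 1 else 0)"

definition transition_entry :: "complex mat \<Rightarrow> real \<Rightarrow> nat \<Rightarrow> nat \<Rightarrow> complex" where
  "transition_entry A t u v = (\<Sum>k. ((\<i> * of_real t) ^ k / of_nat (fact k)) * (A ^\<^sub>m k) $$ (u, v))"

definition sedentary :: "complex mat \<Rightarrow> nat \<Rightarrow> bool" where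
  "sedentary A u \<longleftrightarrow>
     (\<exists>C::real. 0 < C \<and> C \<le> 1 \<and> (INF t\<in>{0<..}. cmod (transition_entry A t u u)) \<ge> C)"

end

theory Submission
  imports Defs
begin

(* The adjacency matrix of G(m) has eigenvalues 0, 1, -1, sqrt(m+1) and -sqrt(m+1), with explicit
   eigenvectors that are constant on the middle vertices and on the leaves (for 0 and +-sqrt(m+1)) or
   vanish at the centre (for +-1).  Writing the indicator vector of a vertex u as a sum of eigenvectors
   x_mu turns U(t)_uu into the finite sum  sum_mu x_mu(u) exp(i mu t),  a real combination of cos t,
   cos(sqrt(m+1) t) and a constant.  This function is 1 at t = 0 and nonpositive at t = pi/sqrt(m+1)
   (centre) or t = pi (other vertices, using m >= 2), so by the intermediate value theorem the return
   amplitude vanishes at some t > 0, which rules out sedentariness. *)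

definition eigen_fun :: "'a::comm_ring_1 mat \<Rightarrow> 'a \<Rightarrow> (nat \<Rightarrow> 'a) \<Rightarrow> bool" where
  "eigen_fun A \<mu> x \<longleftrightarrow> (\<forall>v<dim_row A. (\<Sum>l<dim_col A. A $$ (v, l) * x l) = \<mu> * x v)"

lemma eigen_fun_scale: "eigen_fun A \<mu> x \<Longrightarrow> eigen_fun A \<mu> (\<lambda>v. c * x v)"
  unfolding eigen_fun_def by (simp add: mult.left_commute sum_distrib_left[symmetric])

lemma eigen_fun_pow_mat:
  assumes A: "A \<in> carrier_mat n n" and x: "eigen_fun A \<mu> x" and v: "v < n"
  shows "(\<Sum>l<n. (A ^\<^sub>m k) $$ (v, l) * x l) = \<mu> ^ k * x v"
  using v
proof (induction k arbitrary: v)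
  case 0
  have "(\<Sum>l<n. (A ^\<^sub>m 0) $$ (v, l) * x l) = (\<Sum>l<n. if l = v then x l else 0)"
    using A 0 by (intro sum.cong) auto
  then show ?case using 0 by simp
next
  case (Suc k)
  have "(\<Sum>l<n. (A ^\<^sub>m Suc k) $$ (v, l) * x l)
      = (\<Sum>l<n. \<Sum>p<n. (A ^\<^sub>m k) $$ (v, p) * A $$ (p, l) * x l)"
    using A Suc.prems
    by (intro sum.cong) (auto simp: scalar_prod_def sum_distrib_right atLeast0LessThan)
  also have "\<dots> = (\<Sum>p<n. (A ^\<^sub>m k) $$ (v, p) * (\<Sum>l<n. A $$ (p, l) * x l))"
    by (subst sum.swap) (simp add: sum_distrib_left mult.assoc)
  also have "\<dots> = (\<Sum>p<n. (A ^\<^sub>m k) $$ (v, p) * (\<mu> * x p))"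
    using x A by (intro sum.cong) (auto simp: eigen_fun_def)
  also have "\<dots> = \<mu> ^ Suc k * x v"
    using Suc by (simp add: mult.left_commute flip: sum_distrib_left sum_distrib_right)
  finally show ?case .
qed

lemma sum_mult_sum_list_swap:
  fixes f :: "'b \<Rightarrow> 'a::comm_semiring_0"
  shows "(\<Sum>l\<in>L. f l * (\<Sum>p\<leftarrow>ps. g p l)) = (\<Sum>p\<leftarrow>ps. \<Sum>l\<in>L. f l * g p l)"
  by (induction ps) (simp_all add: distrib_left sum.distrib)

lemma sums_sum_list:
  fixes f :: "'b \<Rightarrow> nat \<Rightarrow> 'a::real_normed_vector"
  shows "(\<And>p. p \<in> set ps \<Longrightarrow> f p sums s p) \<Longrightarrow> (\<lambda>k. \<Sum>p\<leftarrow>ps. f p k) sums (\<Sum>p\<leftarrow>ps. s p)"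
  by (induction ps) (simp_all add: sums_add)

lemma pow_mat_diag_eigen_sum:
  fixes A :: "'a::comm_ring_1 mat"
  assumes A: "A \<in> carrier_mat n n" and u: "u < n"
    and eigen: "\<And>\<mu> x. (\<mu>, x) \<in> set ps \<Longrightarrow> eigen_fun A \<mu> x"
    and decomp: "\<And>v. v < n \<Longrightarrow> (\<Sum>(\<mu>, x)\<leftarrow>ps. x v) = (if v = u then 1 else 0)"
  shows "(A ^\<^sub>m k) $$ (u, u) = (\<Sum>(\<mu>, x)\<leftarrow>ps. \<mu> ^ k * x u)"
proof -
  have "(\<Sum>l<n. (A ^\<^sub>m k) $$ (u, l) * (\<Sum>(\<mu>, x)\<leftarrow>ps. x l))
      = (\<Sum>l<n. if l = u then (A ^\<^sub>m k) $$ (u, l) else 0)"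
    by (intro sum.cong) (simp_all add: decomp)
  then have "(A ^\<^sub>m k) $$ (u, u) = (\<Sum>l<n. (A ^\<^sub>m k) $$ (u, l) * (\<Sum>(\<mu>, x)\<leftarrow>ps. x l))"
    using u by simp
  also have "\<dots> = (\<Sum>(\<mu>, x)\<leftarrow>ps. \<Sum>l<n. (A ^\<^sub>m k) $$ (u, l) * x l)"
    using sum_mult_sum_list_swap[where f = "\<lambda>l. (A ^\<^sub>m k) $$ (u, l)" and g = "\<lambda>(\<mu>, x). x"]
    by (simp add: case_prod_unfold)
  also have "\<dots> = (\<Sum>(\<mu>, x)\<leftarrow>ps. \<mu> ^ k * x u)"
    using eigen_fun_pow_mat[OF A eigen u] by (intro arg_cong[of _ _ sum_list] map_cong) auto
  finally show ?thesis .
qed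

lemma transition_entry_eigen_sum:
  assumes A: "A \<in> carrier_mat n n" and u: "u < n"
    and eigen: "\<And>\<mu> x. (\<mu>, x) \<in> set ps \<Longrightarrow> eigen_fun A \<mu> x"
    and decomp: "\<And>v. v < n \<Longrightarrow> (\<Sum>(\<mu>, x)\<leftarrow>ps. x v) = (if v = u then 1 else 0)"
  shows "transition_entry A t u u = (\<Sum>(\<mu>, x)\<leftarrow>ps. exp (\<i> * of_real t * \<mu>) * x u)"
proof -
  have "(\<lambda>k. (\<i> * of_real t * \<mu>) ^ k / of_nat (fact k) * x u) sums (exp (\<i> * of_real t * \<mu>) * x u)"
    for \<mu> x
    using exp_converges[of "\<i> * of_real t * \<mu>"]
    by (intro sums_mult2) (simp add: scaleR_conv_of_real divide_inverse mult.commute)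
  then have "(\<lambda>k. \<Sum>(\<mu>, x)\<leftarrow>ps. (\<i> * of_real t * \<mu>) ^ k / of_nat (fact k) * x u)
      sums (\<Sum>(\<mu>, x)\<leftarrow>ps. exp (\<i> * of_real t * \<mu>) * x u)"
    by (intro sums_sum_list) (simp add: case_prod_unfold)
  moreover have "(\<i> * of_real t) ^ k / of_nat (fact k) * (A ^\<^sub>m k) $$ (u, u)
      = (\<Sum>(\<mu>, x)\<leftarrow>ps. (\<i> * of_real t * \<mu>) ^ k / of_nat (fact k) * x u)" for k
  proof -
    have "(\<i> * of_real t) ^ k / of_nat (fact k) * (A ^\<^sub>m k) $$ (u, u)
        = (\<i> * of_real t) ^ k / of_nat (fact k) * (\<Sum>(\<mu>, x)\<leftarrow>ps. \<mu> ^ k * x u)"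
      by (simp only: pow_mat_diag_eigen_sum[OF A u eigen decomp])
    also have "\<dots> = (\<Sum>(\<mu>, x)\<leftarrow>ps. (\<i> * of_real t) ^ k / of_nat (fact k) * (\<mu> ^ k * x u))"
      unfolding case_prod_unfold by (rule sum_list_const_mult[symmetric])
    finally show ?thesis
      by (simp add: power_mult_distrib mult_ac)
  qed
  ultimately show ?thesis
    unfolding transition_entry_def by (simp add: sums_iff)
qed

lemma exp_add_exp_uminus:
  assumes "\<mu> = of_real \<sigma>"
  shows "exp (\<i> * of_real t * \<mu>) + exp (\<i> * of_real t * - \<mu>) = 2 * of_real (cos (\<sigma> * t))"
proof -
  have "exp (\<i> * of_real t * \<mu>) = cis (\<sigma> * t)" "exp (\<i> * of_real t * - \<mu>) = cis (- (\<sigma> * t))"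
    using assms by (simp_all add: cis_conv_exp mult_ac)
  then show ?thesis by (simp add: complex_eq_iff)
qed

lemma not_sedentary_if_return_changes_sign:
  fixes f :: "real \<Rightarrow> real"
  assumes entry: "\<And>t. transition_entry A t u u = of_real (f t)"
    and "continuous_on {0..b} f" "0 < b" "0 < f 0" "f b \<le> 0"
  shows "\<not> sedentary A u"
proof
  assume "sedentary A u"
  then obtain C where C: "0 < C" "C \<le> (INF t\<in>{0<..}. cmod (transition_entry A t u u))"
    unfolding sedentary_def by auto
  obtain t where "0 \<le> t" "f t = 0"
    using IVT2'[of f b 0 0] assms by auto
  moreover have "t \<noteq> 0"
    using \<open>0 < f 0\<close> \<open>f t = 0\<close> by auto
  ultimately have "(INF t\<in>{0<..}. cmod (transition_entry A t u u)) \<le> 0"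
    using entry by (intro cINF_lower2[where x = t]) (auto intro: bdd_belowI[where m = 0])
  with C show False by simp
qed

lemma subdiv_star_adj_carrier: "subdiv_star_adj m \<in> carrier_mat (2*m+1) (2*m+1)"
  by (simp add: subdiv_star_adj_def)

lemma subdiv_star_adj_mult_fun:
  assumes v: "v < 2*m+1"
  shows "(\<Sum>l<2*m+1. subdiv_star_adj m $$ (v, l) * x l) =
    (if v = 0 then (\<Sum>i=1..m. x i) else if v \<le> m then x 0 + x (v+m) else x (v-m))"
proof -
  have "(\<Sum>l<2*m+1. subdiv_star_adj m $$ (v, l) * x l)
      = (\<Sum>l<2*m+1. if subdiv_star_edge m v l then x l else 0)"
    using v by (intro sum.cong) (auto simp: subdiv_star_adj_def)
  also have "\<dots> = (\<Sum>l\<in>{l\<in>{..<2*m+1}. subdiv_star_edge m v l}. x l)"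
    by (rule sum.inter_filter[symmetric]) simp
  also have "{l\<in>{..<2*m+1}. subdiv_star_edge m v l} =
      (if v = 0 then {1..m} else if v \<le> m then {0, v+m} else {v-m})"
    using v by (auto simp: subdiv_star_edge_def)
  finally show ?thesis by simp
qed

definition star_fun :: "nat \<Rightarrow> 'a \<Rightarrow> (nat \<Rightarrow> 'a) \<Rightarrow> (nat \<Rightarrow> 'a) \<Rightarrow> nat \<Rightarrow> 'a" where
  "star_fun m c f g v = (if v = 0 then c else if v \<le> m then f v else g (v - m))"

lemma eigen_fun_star_fun:
  assumes centre: "\<mu> * c = (\<Sum>i=1..m. f i)"
    and middle: "\<And>i. 1 \<le> i \<Longrightarrow> i \<le> m \<Longrightarrow> \<mu> * f i = c + g i"
    and leaf: "\<And>i. 1 \<le> i \<Longrightarrow> i \<le> m \<Longrightarrow> \<mu> * g i = f i"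
  shows "eigen_fun (subdiv_star_adj m) \<mu> (star_fun m c f g)"
  unfolding eigen_fun_def
proof (intro allI impI)
  let ?x = "star_fun m c f g"
  fix v assume "v < dim_row (subdiv_star_adj m)"
  then have v: "v < 2*m+1"
    using carrier_matD[OF subdiv_star_adj_carrier] by simp
  have "(\<Sum>i=1..m. ?x i) = (\<Sum>i=1..m. f i)"
    by (intro sum.cong) (auto simp: star_fun_def)
  then have "(\<Sum>l<2*m+1. subdiv_star_adj m $$ (v, l) * ?x l) = \<mu> * ?x v"
    using v centre middle[of v] leaf[of "v - m"]
    by (simp only: subdiv_star_adj_mult_fun[OF v]) (auto simp: star_fun_def)
  then show "(\<Sum>l<dim_col (subdiv_star_adj m). subdiv_star_adj m $$ (v, l) * ?x l) = \<mu> * ?x v"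
    using carrier_matD[OF subdiv_star_adj_carrier] by simp
qed

definition star_radial :: "nat \<Rightarrow> complex \<Rightarrow> nat \<Rightarrow> complex" where
  "star_radial m \<mu> = star_fun m (of_nat m) (\<lambda>_. \<mu>) (\<lambda>_. 1)"

definition star_null :: "nat \<Rightarrow> nat \<Rightarrow> complex" where
  "star_null m = star_fun m 1 (\<lambda>_. 0) (\<lambda>_. -1)"

definition star_arm :: "nat \<Rightarrow> nat \<Rightarrow> complex \<Rightarrow> nat \<Rightarrow> complex" where
  "star_arm m j \<mu> = star_fun m 0 (\<lambda>i. of_bool (i = j) - 1 / of_nat m)
     (\<lambda>i. \<mu> * (of_bool (i = j) - 1 / of_nat m))"

lemma eigen_fun_star_radial:
  "\<mu>\<^sup>2 = of_nat m + 1 \<Longrightarrow> eigen_fun (subdiv_star_adj m) \<mu> (star_radial m \<mu>)"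
  unfolding star_radial_def by (rule eigen_fun_star_fun) (simp_all add: power2_eq_square)

lemma eigen_fun_star_null: "eigen_fun (subdiv_star_adj m) 0 (star_null m)"
  unfolding star_null_def by (rule eigen_fun_star_fun) simp_all

lemma eigen_fun_star_arm:
  assumes j: "1 \<le> j" "j \<le> m" and \<mu>: "\<mu>\<^sup>2 = 1"
  shows "eigen_fun (subdiv_star_adj m) \<mu> (star_arm m j \<mu>)"
  unfolding star_arm_def
proof (rule eigen_fun_star_fun)
  have "(\<Sum>i=1..m. of_bool (i = j) - 1 / of_nat m :: complex) = 1 - of_nat m * (1 / of_nat m)"
    using j by (simp add: sum_subtractf)
  then show "\<mu> * 0 = (\<Sum>i=1..m. of_bool (i = j) - 1 / of_nat m :: complex)"
    using j by simp
qed (use \<mu> in \<open>simp_all add: power2_eq_square\<close>)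

lemma of_real_sqrt_Suc_power2: "(of_real (sqrt (real m + 1)) :: complex)\<^sup>2 = of_nat m + 1"
proof -
  have "(sqrt (real m + 1))\<^sup>2 = real m + 1"
    by simp
  then have "(of_real ((sqrt (real m + 1))\<^sup>2) :: complex) = of_real (real m + 1)"
    by (rule arg_cong)
  then show ?thesis
    by (simp only: of_real_power of_real_add of_real_of_nat_eq of_real_1)
qed

lemma transition_entry_subdiv_star_centre:
  fixes m :: nat
  defines "\<sigma> \<equiv> sqrt (real m + 1)"
  shows "transition_entry (subdiv_star_adj m) t 0 0 = of_real (1 / (real m + 1) + real m / (real m + 1) * cos (\<sigma> * t))"
proof -
  define s where "s = (of_real \<sigma> :: complex)"
  define a where "a = 1 / (of_nat m + 1 :: complex)"
  have s2: "s\<^sup>2 = of_nat m + 1" "(- s)\<^sup>2 = of_nat m + 1"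
    using of_real_sqrt_Suc_power2 unfolding s_def \<sigma>_def by simp_all
  have "(of_nat m + 1 :: complex) \<noteq> 0"
    by (metis of_nat_Suc of_nat_eq_0_iff nat.distinct(1) add.commute)
  then have a: "a * of_nat m + a = 1"
    unfolding a_def by (simp add: field_simps)
  let ?ps = "[(s, \<lambda>v. a / 2 * star_radial m s v), (- s, \<lambda>v. a / 2 * star_radial m (- s) v),
    (0, \<lambda>v. a * star_null m v)]"
  have "transition_entry (subdiv_star_adj m) t 0 0 = (\<Sum>(\<mu>, x)\<leftarrow>?ps. exp (\<i> * of_real t * \<mu>) * x 0)"
  proof (rule transition_entry_eigen_sum[OF subdiv_star_adj_carrier])
    show "(\<mu>, x) \<in> set ?ps \<Longrightarrow> eigen_fun (subdiv_star_adj m) \<mu> x" for \<mu> x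
      using s2 eigen_fun_star_null
      by (auto intro!: eigen_fun_scale eigen_fun_star_radial simp del: times_divide_eq_left)
    show "(\<Sum>(\<mu>, x)\<leftarrow>?ps. x v) = (if v = 0 then 1 else 0)" for v
      using a by (simp add: star_radial_def star_null_def star_fun_def)
  qed simp
  also have "\<dots> = a * of_nat m * ((exp (\<i> * of_real t * s) + exp (\<i> * of_real t * - s)) / 2) + a"
    by (simp add: star_radial_def star_null_def star_fun_def algebra_simps)
  also have "\<dots> = of_real (1 / (real m + 1) + real m / (real m + 1) * cos (\<sigma> * t))"
    unfolding exp_add_exp_uminus[OF s_def] by (simp add: a_def add.commute)
  finally show ?thesis .
qed

lemma transition_entry_subdiv_star_middle:
  fixes m :: nat
  defines "\<sigma> \<equiv> sqrt (real m + 1)"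
  assumes j: "1 \<le> j" "j \<le> m"
  shows "transition_entry (subdiv_star_adj m) t j j = of_real ((1 - 1 / real m) * cos t + cos (\<sigma> * t) / real m)"
proof -
  define s where "s = (of_real \<sigma> :: complex)"
  define c where "c = 1 / (2 * of_nat m * s)"
  have s2: "s\<^sup>2 = of_nat m + 1" "(- s)\<^sup>2 = of_nat m + 1"
    using of_real_sqrt_Suc_power2 unfolding s_def \<sigma>_def by simp_all
  have "s \<noteq> 0" and m0: "(of_nat m :: complex) \<noteq> 0"
    using j by (auto simp: s_def \<sigma>_def)
  then have c: "c * s = 1 / (2 * of_nat m)"
    unfolding c_def by (simp add: field_simps)
  let ?ps = "[(1, \<lambda>v. 1 / 2 * star_arm m j 1 v), (- 1, \<lambda>v. 1 / 2 * star_arm m j (- 1) v),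
    (s, \<lambda>v. c * star_radial m s v), (- s, \<lambda>v. - c * star_radial m (- s) v)]"
  have "transition_entry (subdiv_star_adj m) t j j = (\<Sum>(\<mu>, x)\<leftarrow>?ps. exp (\<i> * of_real t * \<mu>) * x j)"
  proof (rule transition_entry_eigen_sum[OF subdiv_star_adj_carrier])
    show "(\<mu>, x) \<in> set ?ps \<Longrightarrow> eigen_fun (subdiv_star_adj m) \<mu> x" for \<mu> x
      using s2 j by (auto intro!: eigen_fun_scale eigen_fun_star_radial eigen_fun_star_arm
          simp del: times_divide_eq_left mult_minus_left)
    show "(\<Sum>(\<mu>, x)\<leftarrow>?ps. x v) = (if v = j then 1 else 0)" for v
      using j c m0 by (simp add: star_radial_def star_arm_def star_fun_def field_simps)
  qed (use j in simp)
  also have "\<dots> = (1 - 1 / of_nat m) / 2 * (exp (\<i> * of_real t * 1) + exp (\<i> * of_real t * - 1))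
      + c * s * (exp (\<i> * of_real t * s) + exp (\<i> * of_real t * - s))"
    using j by (simp add: star_radial_def star_arm_def star_fun_def algebra_simps)
  also have "\<dots> = of_real ((1 - 1 / real m) * cos t + cos (\<sigma> * t) / real m)"
    unfolding exp_add_exp_uminus[OF s_def] exp_add_exp_uminus[OF of_real_1[symmetric]] c
    by simp
  finally show ?thesis .
qed

lemma transition_entry_subdiv_star_leaf:
  fixes m :: nat
  defines "\<sigma> \<equiv> sqrt (real m + 1)"
  assumes j: "1 \<le> j" "j \<le> m"
  shows "transition_entry (subdiv_star_adj m) t (j + m) (j + m) =
    of_real ((1 - 1 / real m) * cos t + 1 / (real m + 1) + cos (\<sigma> * t) / (real m * (real m + 1)))"
proof -
  define s where "s = (of_real \<sigma> :: complex)"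
  define a where "a = 1 / (of_nat m + 1 :: complex)"
  define d where "d = a / (2 * of_nat m)"
  have s2: "s\<^sup>2 = of_nat m + 1" "(- s)\<^sup>2 = of_nat m + 1"
    using of_real_sqrt_Suc_power2 unfolding s_def \<sigma>_def by simp_all
  have m0: "(of_nat m :: complex) \<noteq> 0"
    using j by simp
  have m1: "(of_nat m + 1 :: complex) \<noteq> 0"
    by (metis of_nat_Suc of_nat_eq_0_iff nat.distinct(1) add.commute)
  let ?ps = "[(1, \<lambda>v. 1 / 2 * star_arm m j 1 v), (- 1, \<lambda>v. - 1 / 2 * star_arm m j (- 1) v),
    (s, \<lambda>v. d * star_radial m s v), (- s, \<lambda>v. d * star_radial m (- s) v),
    (0, \<lambda>v. - a * star_null m v)]"
  have "transition_entry (subdiv_star_adj m) t (j + m) (j + m) =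
      (\<Sum>(\<mu>, x)\<leftarrow>?ps. exp (\<i> * of_real t * \<mu>) * x (j + m))"
  proof (rule transition_entry_eigen_sum[OF subdiv_star_adj_carrier])
    show "(\<mu>, x) \<in> set ?ps \<Longrightarrow> eigen_fun (subdiv_star_adj m) \<mu> x" for \<mu> x
      using s2 j eigen_fun_star_null
      by (auto intro!: eigen_fun_scale eigen_fun_star_radial eigen_fun_star_arm
          simp del: times_divide_eq_left mult_minus_left divide_minus_left)
    show "(\<Sum>(\<mu>, x)\<leftarrow>?ps. x v) = (if v = j + m then 1 else 0)" for v
      using j m0 m1
      by (auto simp: star_radial_def star_arm_def star_null_def star_fun_def d_def a_def divide_simps)
        (simp_all add: algebra_simps)
  qed (use j in simp)
  also have "\<dots> = (1 - 1 / of_nat m) / 2 * (exp (\<i> * of_real t * 1) + exp (\<i> * of_real t * - 1))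
      + d * (exp (\<i> * of_real t * s) + exp (\<i> * of_real t * - s)) + a"
    using j m0 by (simp add: star_radial_def star_arm_def star_null_def star_fun_def field_simps)
  also have "\<dots> = (1 - 1 / of_nat m) * of_real (cos t) + a + 2 * d * of_real (cos (\<sigma> * t))"
    unfolding exp_add_exp_uminus[OF s_def] exp_add_exp_uminus[OF of_real_1[symmetric]] by simp
  also have "2 * d = 1 / (of_nat m * (of_nat m + 1))"
    unfolding d_def a_def by simp
  finally show ?thesis
    by (simp add: a_def distrib_left add.commute)
qed

lemma subdiv_star_centre_not_sedentary:
  assumes "1 \<le> m"
  shows "\<not> sedentary (subdiv_star_adj m) 0"
proof (rule not_sedentary_if_return_changes_sign[OF transition_entry_subdiv_star_centre])
  let ?\<sigma> = "sqrt (real m + 1)"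
  show "0 < pi / ?\<sigma>" by simp
  show "continuous_on {0..pi / ?\<sigma>} (\<lambda>t. 1 / (real m + 1) + real m / (real m + 1) * cos (?\<sigma> * t))"
    by (intro continuous_intros)
  show "0 < 1 / (real m + 1) + real m / (real m + 1) * cos (?\<sigma> * 0)"
    by (simp add: add_pos_nonneg)
  show "1 / (real m + 1) + real m / (real m + 1) * cos (?\<sigma> * (pi / ?\<sigma>)) \<le> 0"
    using assms by (simp add: field_simps)
qed

lemma subdiv_star_middle_not_sedentary:
  assumes m: "2 \<le> m" and j: "1 \<le> j" "j \<le> m"
  shows "\<not> sedentary (subdiv_star_adj m) j"
proof (rule not_sedentary_if_return_changes_sign[OF transition_entry_subdiv_star_middle[OF j]])
  let ?\<sigma> = "sqrt (real m + 1)"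
  show "continuous_on {0..pi} (\<lambda>t. (1 - 1 / real m) * cos t + cos (?\<sigma> * t) / real m)"
    using m by (intro continuous_intros) auto
  show "0 < (1 - 1 / real m) * cos 0 + cos (?\<sigma> * 0) / real m"
    using m by simp
  have "cos (?\<sigma> * pi) / real m \<le> 1 / real m"
    by (simp add: divide_right_mono)
  moreover have "2 / real m \<le> 1"
    using m by simp
  ultimately show "(1 - 1 / real m) * cos pi + cos (?\<sigma> * pi) / real m \<le> 0"
    by simp
qed simp

lemma subdiv_star_leaf_not_sedentary:
  assumes m: "2 \<le> m" and j: "1 \<le> j" "j \<le> m"
  shows "\<not> sedentary (subdiv_star_adj m) (j + m)"
proof (rule not_sedentary_if_return_changes_sign[OF transition_entry_subdiv_star_leaf[OF j]])
  let ?\<sigma> = "sqrt (real m + 1)"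
  have "0 < real m"
    using m by simp
  then have split: "1 / (real m + 1) + 1 / (real m * (real m + 1)) = 1 / real m"
    by (smt (verit) add_divide_distrib nonzero_divide_mult_cancel_left nonzero_divide_mult_cancel_right)
  show "continuous_on {0..pi} (\<lambda>t. (1 - 1 / real m) * cos t + 1 / (real m + 1) + cos (?\<sigma> * t) / (real m * (real m + 1)))"
    using m by (intro continuous_intros) auto
  show "0 < (1 - 1 / real m) * cos 0 + 1 / (real m + 1) + cos (?\<sigma> * 0) / (real m * (real m + 1))"
    using split by simp
  have "cos (?\<sigma> * pi) / (real m * (real m + 1)) \<le> 1 / (real m * (real m + 1))"
    by (simp add: divide_right_mono)
  moreover have "2 / real m \<le> 1"
    using m by simp
  ultimately show "(1 - 1 / real m) * cos pi + 1 / (real m + 1) + cos (?\<sigma> * pi) / (real m * (real m + 1)) \<le> 0"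
    using split by simp
qed simp

theorem corollary19:
  fixes m u :: nat
  assumes "m \<ge> 2" and "u < 2*m+1"
  shows "\<not> sedentary (subdiv_star_adj m) u"
proof -
  consider "u = 0" | "1 \<le> u" "u \<le> m" | "m < u"
    by linarith
  then show ?thesis
  proof cases
    case 1
    then show ?thesis using assms(1) subdiv_star_centre_not_sedentary by simp
  next
    case 2
    then show ?thesis using assms(1) subdiv_star_middle_not_sedentary by simp
  next
    case 3
    then have "u = (u - m) + m" "1 \<le> u - m" "u - m \<le> m"
      using assms(2) by auto
    then show ?thesis using assms(1) subdiv_star_leaf_not_sedentary by metis
  qed
qed

end
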